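(* Let $\{F_x : x\in V(G)\}$ be a representation of a restricted frame graph $G$, and let $u,v\in V(G)$ be such that $F_u$ is inside $F_v$. Then for every vertex $w$ in the connected component of $G-N[v]$ containing $u$, the frame $F_w$ is inside $F_v$.
   Context: $N[v]=\{v\}\cup N(v)$. A frame is the boundary of an axis-parallel box $I\times J\subset\mathbb R^2$. A representation of a graph $G$ as a restricted frame graph is a family of frames $\{F_x : x\in V(G)\}$ with $xy\in E(G)$ iff $F_x\cap F_y\neq\emptyset$, satisfying: (1) corners of a frame do not coincide with any point of another frame; (2) the left side of any frame does not intersect any other frame; (3) if the right side of a frame intersects a second frame, this right side intersects both the top and the bottom side of the second frame; (4) if two frames have non-empty intersection, then no frame is entirely contained in the intersection of the two regions bounded by these two frames. $F_2$ is inside $F_1$ if $F_1\cap F_2=\emptyset$ and $F_2$ lies in the region bounded by $F_1$. *)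

theory Defs
  imports Main "HOL-Library.Product_Plus" Complex_Main
begin

text \<open>A frame is the boundary of a non-degenerate axis-parallel box
  [xl,xr] x [yb,yt] in the plane (points are pairs of reals).\<close>

record frame =
  xl :: real
  xr :: real
  yb :: real
  yt :: real

definition valid_frame :: "frame \<Rightarrow> bool" where
  "valid_frame f \<longleftrightarrow> xl f < xr f \<and> yb f < yt f"

definition region :: "frame \<Rightarrow> (real \<times> real) set" where
  "region f = {xl f..xr f} \<times> {yb f..yt f}"

definition frame_set :: "frame \<Rightarrow> (real \<times> real) set" where
  "frame_set f = {p \<in> region f. fst p = xl f \<or> fst p = xr f \<or> snd p = yb f \<or> snd p = yt f}"

definition left_side :: "frame \<Rightarrow> (real \<times> real) set" where
  "left_side f = {xl f} \<times> {yb f..yt f}"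

definition right_side :: "frame \<Rightarrow> (real \<times> real) set" where
  "right_side f = {xr f} \<times> {yb f..yt f}"

definition bottom_side :: "frame \<Rightarrow> (real \<times> real) set" where
  "bottom_side f = {xl f..xr f} \<times> {yb f}"

definition top_side :: "frame \<Rightarrow> (real \<times> real) set" where
  "top_side f = {xl f..xr f} \<times> {yt f}"

definition corners :: "frame \<Rightarrow> (real \<times> real) set" where
  "corners f = {xl f, xr f} \<times> {yb f, yt f}"

definition inside :: "frame \<Rightarrow> frame \<Rightarrow> bool" where
  "inside f2 f1 \<longleftrightarrow> frame_set f1 \<inter> frame_set f2 = {} \<and> frame_set f2 \<subseteq> region f1"

definition simple_graph :: "'a set \<Rightarrow> ('a \<Rightarrow> 'a \<Rightarrow> bool) \<Rightarrow> bool" where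
  "simple_graph V E \<longleftrightarrow> finite V \<and> (\<forall>x y. E x y \<longrightarrow> x \<in> V \<and> y \<in> V)
     \<and> (\<forall>x y. E x y \<longrightarrow> E y x) \<and> (\<forall>x. \<not> E x x)"

definition restricted_frame_rep :: "'a set \<Rightarrow> ('a \<Rightarrow> 'a \<Rightarrow> bool) \<Rightarrow> ('a \<Rightarrow> frame) \<Rightarrow> bool" where
  "restricted_frame_rep V E F \<longleftrightarrow>
     (\<forall>x\<in>V. valid_frame (F x)) \<and>
     (\<forall>x\<in>V. \<forall>y\<in>V. x \<noteq> y \<longrightarrow> (E x y \<longleftrightarrow> frame_set (F x) \<inter> frame_set (F y) \<noteq> {})) \<and>
     \<comment> \<open>(1) corners of a frame do not lie on another frame\<close>
     (\<forall>x\<in>V. \<forall>y\<in>V. x \<noteq> y \<longrightarrow> corners (F x) \<inter> frame_set (F y) = {}) \<and>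
     \<comment> \<open>(2) the left side of a frame does not meet any other frame\<close>
     (\<forall>x\<in>V. \<forall>y\<in>V. x \<noteq> y \<longrightarrow> left_side (F x) \<inter> frame_set (F y) = {}) \<and>
     \<comment> \<open>(3) a right side meeting another frame meets its top and bottom sides\<close>
     (\<forall>x\<in>V. \<forall>y\<in>V. x \<noteq> y \<longrightarrow> right_side (F x) \<inter> frame_set (F y) \<noteq> {} \<longrightarrow>
         right_side (F x) \<inter> top_side (F y) \<noteq> {} \<and> right_side (F x) \<inter> bottom_side (F y) \<noteq> {}) \<and>
     \<comment> \<open>(4) no frame lies in the intersection of the regions of two intersecting frames\<close>
     (\<forall>x\<in>V. \<forall>y\<in>V. x \<noteq> y \<longrightarrow> frame_set (F x) \<inter> frame_set (F y) \<noteq> {} \<longrightarrow>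
         (\<forall>z\<in>V. \<not> frame_set (F z) \<subseteq> region (F x) \<inter> region (F y)))"

definition closed_nbhd :: "'a set \<Rightarrow> ('a \<Rightarrow> 'a \<Rightarrow> bool) \<Rightarrow> 'a \<Rightarrow> 'a set" where
  "closed_nbhd V E v = {v} \<union> {y \<in> V. E v y}"

definition same_comp_minus :: "'a set \<Rightarrow> ('a \<Rightarrow> 'a \<Rightarrow> bool) \<Rightarrow> 'a set \<Rightarrow> 'a \<Rightarrow> 'a \<Rightarrow> bool" where
  "same_comp_minus V E S u w \<longleftrightarrow> u \<in> V - S \<and> w \<in> V - S \<and>
     (\<lambda>a b. E a b \<and> a \<in> V - S \<and> b \<in> V - S)\<^sup>*\<^sup>* u w"

end

theory Submission
  imports Defs
begin

text \<open>Frames are connected and the boundary of F_v separates its interior from its exterior,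
  so a frame disjoint from F_v lies either inside or outside it.  If F_y is inside F_v, every
  neighbour x of y outside N[v] meets the region of F_v but not F_v itself, hence F_x is
  inside F_v as well; induction along a path of G - N[v] starting at u finishes the
  proof.\<close>

lemma box_subset_if_boundaries_disjoint:
  fixes a b c d p q r s x0 y0 :: real
  assumes "a < b" "c < d" "p < q" "r < s"
    and on_boundary: "a \<le> x0" "x0 \<le> b" "c \<le> y0" "y0 \<le> d" "x0 = a \<or> x0 = b \<or> y0 = c \<or> y0 = d"
    and in_box: "p \<le> x0" "x0 \<le> q" "r \<le> y0" "y0 \<le> s"
    and disjoint: "\<And>x y. a \<le> x \<Longrightarrow> x \<le> b \<Longrightarrow> c \<le> y \<Longrightarrow> y \<le> d \<Longrightarrow> x = a \<or> x = b \<or> y = c \<or> y = d \<Longrightarrow>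
       p \<le> x \<Longrightarrow> x \<le> q \<Longrightarrow> r \<le> y \<Longrightarrow> y \<le> s \<Longrightarrow> x = p \<or> x = q \<or> y = r \<or> y = s \<Longrightarrow> False"
  shows "p \<le> a \<and> b \<le> q \<and> r \<le> c \<and> d \<le> s"
proof -
  \<comment> \<open>if the boxes were not nested, the two boundaries would cross at a point whose
      coordinates are among the given ones\<close>
  have "\<And>x y. x \<in> {a, b, p, q, x0} \<Longrightarrow> y \<in> {c, d, r, s, y0} \<Longrightarrow>
      a \<le> x \<Longrightarrow> x \<le> b \<Longrightarrow> c \<le> y \<Longrightarrow> y \<le> d \<Longrightarrow> x = a \<or> x = b \<or> y = c \<or> y = d \<Longrightarrow>
      p \<le> x \<Longrightarrow> x \<le> q \<Longrightarrow> r \<le> y \<Longrightarrow> y \<le> s \<Longrightarrow> x = p \<or> x = q \<or> y = r \<or> y = s \<Longrightarrow> False"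
    using disjoint by blast
  then show ?thesis
    using assms(1-4) on_boundary in_box
    by (simp only: insert_iff empty_iff simp_thms) (smt (verit))
qed

lemma inside_if_disjoint_meets_region:
  assumes "valid_frame X" "valid_frame Y"
    and disjoint: "frame_set X \<inter> frame_set Y = {}"
    and "z \<in> frame_set X" "z \<in> region Y"
  shows "inside X Y"
proof -
  obtain x0 y0 where z: "z = (x0, y0)" by (cases z)
  have "xl Y \<le> xl X \<and> xr X \<le> xr Y \<and> yb Y \<le> yb X \<and> yt X \<le> yt Y"
  proof (rule box_subset_if_boundaries_disjoint[of _ _ _ _ _ _ _ _ x0 y0])
    fix x y
    assume "xl X \<le> x" "x \<le> xr X" "yb X \<le> y" "y \<le> yt X"
      "x = xl X \<or> x = xr X \<or> y = yb X \<or> y = yt X"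
      "xl Y \<le> x" "x \<le> xr Y" "yb Y \<le> y" "y \<le> yt Y"
      "x = xl Y \<or> x = xr Y \<or> y = yb Y \<or> y = yt Y"
    then have "(x, y) \<in> frame_set X \<inter> frame_set Y"
      by (auto simp: frame_set_def region_def)
    with disjoint show False by blast
  qed (use assms z in \<open>auto simp: valid_frame_def frame_set_def region_def\<close>)
  then have "frame_set X \<subseteq> region Y"
    by (auto simp: frame_set_def region_def)
  with disjoint show ?thesis
    by (simp add: inside_def Int_commute)
qed

lemma restricted_frame_rep_edge_iff:
  assumes "restricted_frame_rep V E F" "x \<in> V" "y \<in> V" "x \<noteq> y"
  shows "E x y \<longleftrightarrow> frame_set (F x) \<inter> frame_set (F y) \<noteq> {}"
proof -
  have "\<forall>x\<in>V. \<forall>y\<in>V. x \<noteq> y \<longrightarrow> (E x y \<longleftrightarrow> frame_set (F x) \<inter> frame_set (F y) \<noteq> {})"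
    using assms(1) unfolding restricted_frame_rep_def by (elim conjE)
  with assms(2-4) show ?thesis by blast
qed

lemma inside_neighbour_outside_closed_nbhd:
  assumes G: "simple_graph V E" and rep: "restricted_frame_rep V E F"
    and "v \<in> V" and inside_y: "inside (F y) (F v)"
    and Eyx: "E y x" and x_notin: "x \<notin> closed_nbhd V E v"
  shows "inside (F x) (F v)"
proof -
  have "x \<in> V" "y \<in> V" "y \<noteq> x" using G Eyx by (auto simp: simple_graph_def)
  moreover have "v \<noteq> x" "\<not> E v x" using x_notin \<open>x \<in> V\<close> by (auto simp: closed_nbhd_def)
  ultimately have disjoint: "frame_set (F x) \<inter> frame_set (F v) = {}"
    and "frame_set (F y) \<inter> frame_set (F x) \<noteq> {}"
    using restricted_frame_rep_edge_iff[OF rep \<open>v \<in> V\<close> \<open>x \<in> V\<close>]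
      restricted_frame_rep_edge_iff[OF rep \<open>y \<in> V\<close> \<open>x \<in> V\<close>] Eyx
    by (auto simp: Int_commute)
  then obtain z where z: "z \<in> frame_set (F x)" "z \<in> frame_set (F y)" by blast
  with inside_y have "z \<in> region (F v)" by (auto simp: inside_def)
  moreover have "valid_frame (F x)" "valid_frame (F v)"
    using rep \<open>x \<in> V\<close> \<open>v \<in> V\<close> by (auto simp: restricted_frame_rep_def)
  ultimately show ?thesis
    using inside_if_disjoint_meets_region[OF _ _ disjoint z(1)] by blast
qed

theorem corollary3p6:
  fixes V :: "'a set" and E :: "'a \<Rightarrow> 'a \<Rightarrow> bool" and F :: "'a \<Rightarrow> frame"
  assumes "simple_graph V E"
    and "restricted_frame_rep V E F"
    and "u \<in> V" and "v \<in> V"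
    and "inside (F u) (F v)"
  shows "\<forall>w. same_comp_minus V E (closed_nbhd V E v) u w \<longrightarrow> inside (F w) (F v)"
proof (intro allI impI)
  fix w
  let ?S = "closed_nbhd V E v"
  assume "same_comp_minus V E ?S u w"
  then have "(\<lambda>a b. E a b \<and> a \<in> V - ?S \<and> b \<in> V - ?S)\<^sup>*\<^sup>* u w"
    by (simp add: same_comp_minus_def)
  then show "inside (F w) (F v)"
  proof (induction rule: rtranclp_induct)
    case base
    show ?case using assms(5) .
  next
    case (step y x)
    then show ?case
      using inside_neighbour_outside_closed_nbhd[OF assms(1,2,4)] by blast
  qed
qed

end
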